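(* Let $\Delta^m$ be the last matrix produced by the Incremental Sweeping Algorithm applied to a connection matrix $\Delta\in\mathbb F^{m\times m}$. Then every entry of $\Delta^m$ at a primary pivot position is nonzero, and every nonzero entry of $\Delta^m$ either is at a primary pivot position or lies strictly above the unique primary pivot position of its column. In particular every column of $\Delta^m$ containing no primary pivot is zero.
   Context: Throughout, $\mathbb F$ is a field and $m\ge1$. $U^{pq}$ is the $m\times m$ matrix whose only nonzero entry is a $1$ in position $(p,q)$. Superscripts on matrices are indices, not powers. A connection matrix (over $\mathbb F$) is a matrix $\Delta\in\mathbb F^{m\times m}$ together with a partition $\{1,\dots,m\}=J_0\sqcup\cdots\sqcup J_b$ (the column/row partition; the $J_k$ need not consist of consecutive integers) such that $\Delta$ is upper triangular, $\Delta\Delta=0$, and $\Delta_{ij}=0$ unless $i<j$ and $(i,j)\in\bigcup_{k=1}^bJ_{k-1}\times J_k$. For $1\le r\le m-1$ the $r$-th diagonal is $\{(j-r,j):r<j\le m\}$. Incremental Sweeping Algorithm (ISA) applied to a connection matrix $\Delta$: set $\Delta^0=\Delta^1=\Delta$. For $r=1,\dots,m-1$ in turn: (Markup) for every position $(j-r,j)$ on the $r$-th diagonal with $\Delta^r_{j-r,j}\ne0$ such that no position in column $j$ was marked as a primary pivot at an earlier iteration: if some position $(j-r,p)$ of row $j-r$ was marked as a primary pivot at an earlier iteration, mark $(j-r,j)$ as a change-of-basis pivot of iteration $r$; otherwise mark $(j-r,j)$ permanently as a primary pivot (marked at iteration $r$). (Update) Let $T^r=I-\sum \frac{\Delta^r_{j-r,j}}{\Delta^r_{j-r,p}}U^{pj}$,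 the sum running over all change-of-basis pivots $(j-r,j)$ of iteration $r$, where $(j-r,p)$ is the primary pivot position in row $j-r$; set $\Delta^{r+1}=(T^r)^{-1}\Delta^rT^r$. The primary pivots of $\Delta^m$ are all positions marked as primary pivots at iterations $1,\dots,m-1$. *)

theory Defs
  imports "Jordan_Normal_Form.Gauss_Jordan_Elimination"
begin

text \<open>Matrices are Jordan_Normal_Form matrices; indices are 0-based, so the
 r-th diagonal consists of the positions (j - r, j) with r \<le> j < m.\<close>

definition connection_matrix :: "nat \<Rightarrow> 'a::field mat \<Rightarrow> bool" where
  "connection_matrix m D \<longleftrightarrow>
     D \<in> carrier_mat m m \<and> upper_triangular D \<and> D * D = 0\<^sub>m m m \<and>
     (\<exists>(lvl :: nat \<Rightarrow> nat) (b :: nat). (\<forall>i<m. lvl i \<le> b) \<and>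
        (\<forall>i<m. \<forall>j<m. D $$ (i, j) \<noteq> 0 \<longrightarrow>
            i < j \<and> 1 \<le> lvl j \<and> lvl i = lvl j - 1))"

definition has_prim_row :: "(nat \<times> nat) set \<Rightarrow> nat \<Rightarrow> bool" where
  "has_prim_row P i \<longleftrightarrow> (\<exists>p. (i, p) \<in> P)"

definition has_prim_col :: "(nat \<times> nat) set \<Rightarrow> nat \<Rightarrow> bool" where
  "has_prim_col P j \<longleftrightarrow> (\<exists>k. (k, j) \<in> P)"

definition prim_col_of_row :: "(nat \<times> nat) set \<Rightarrow> nat \<Rightarrow> nat" where
  "prim_col_of_row P i = (THE p. (i, p) \<in> P)"

text \<open>Columns j whose r-th diagonal position (j-r, j) is considered in the markup
 step of iteration r (nonzero entry, no earlier primary pivot in column j).\<close>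
definition isa_cand :: "nat \<Rightarrow> 'a::field mat \<Rightarrow> (nat \<times> nat) set \<Rightarrow> nat set" where
  "isa_cand r D P = {j. r \<le> j \<and> j < dim_col D \<and> D $$ (j - r, j) \<noteq> 0 \<and> \<not> has_prim_col P j}"

definition isa_cob :: "nat \<Rightarrow> 'a::field mat \<Rightarrow> (nat \<times> nat) set \<Rightarrow> nat set" where
  "isa_cob r D P = {j \<in> isa_cand r D P. has_prim_row P (j - r)}"

definition isa_newprim :: "nat \<Rightarrow> 'a::field mat \<Rightarrow> (nat \<times> nat) set \<Rightarrow> (nat \<times> nat) set" where
  "isa_newprim r D P = {(j - r, j) | j. j \<in> isa_cand r D P \<and> \<not> has_prim_row P (j - r)}"

definition isa_T :: "nat \<Rightarrow> 'a::field mat \<Rightarrow> (nat \<times> nat) set \<Rightarrow> 'a mat" where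
  "isa_T r D P = mat (dim_row D) (dim_col D) (\<lambda>(a, b).
      (if a = b then 1 else 0) -
      (\<Sum>j\<in>isa_cob r D P.
         D $$ (j - r, j) / D $$ (j - r, prim_col_of_row P (j - r)) *
         (if a = prim_col_of_row P (j - r) \<and> b = j then 1 else 0)))"

text \<open>One iteration r: state (Delta^r, primary pivots marked at iterations < r)
 to (Delta^(r+1), primary pivots marked at iterations \<le> r).\<close>
definition isa_step :: "nat \<Rightarrow> 'a::field mat \<times> (nat \<times> nat) set \<Rightarrow> 'a mat \<times> (nat \<times> nat) set" where
  "isa_step r S = (let D = fst S; P = snd S; T = isa_T r D P in
      (the (mat_inverse T) * D * T, P \<union> isa_newprim r D P))"

text \<open>isa_state D r = (Delta^r, primary pivots marked at iterations 1..r-1), r \<ge> 1.\<close>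
fun isa_state :: "'a::field mat \<Rightarrow> nat \<Rightarrow> 'a mat \<times> (nat \<times> nat) set" where
  "isa_state D 0 = (D, {})"
| "isa_state D (Suc 0) = (D, {})"
| "isa_state D (Suc (Suc r)) = isa_step (Suc r) (isa_state D (Suc r))"

end

theory Submission
  imports Defs
begin

text \<open>
  Iteration r of the sweeping algorithm conjugates the current
  matrix by T = 1 - N, where N has a single entry c_j in row p of each column j
  of a change-of-basis pivot (j-r, j), p being the column of the primary pivot
  of row j-r.  No such column j carries a pivot, so N N = 0, T^-1 = 1 + N and
  the new matrix is A + N A - (A N + N A N).  We show that the following
  invariant survives every iteration: A is strictly upper triangular, the
  primary pivots found so far lie within distance r of the diagonal, occupy
  distinct rows and columns and have nonzero entries, and every nonzero entry
  within distance r of the diagonal is a primary pivot or lies above the pivot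
  of its column.  For r = m the last clause covers the whole matrix.
\<close>

lemma mat_inverse_eqI:
  fixes T S :: "'a::field mat"
  assumes T: "T \<in> carrier_mat m m" and S: "S \<in> carrier_mat m m"
    and TS: "T * S = 1\<^sub>m m" and ST: "S * T = 1\<^sub>m m"
  shows "the (mat_inverse T) = S"
proof (cases "mat_inverse T")
  case None
  from mat_inverse(1)[OF T None, of undefined] TS ST S T show ?thesis
    by (auto simp: Units_def ring_mat_def)
next
  case (Some S')
  from mat_inverse(2)[OF T Some]
  have S': "S' * T = 1\<^sub>m m" "S' \<in> carrier_mat m m" by auto
  have "S' = S' * (T * S)" using TS S' by simp
  also have "\<dots> = (S' * T) * S" using assoc_mult_mat[OF S'(2) T S] by simp
  also have "\<dots> = S" using S' S by simp
  finally show ?thesis using Some by simp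
qed

lemma square_zero_inverse:
  fixes N :: "'a::field mat"
  assumes N: "N \<in> carrier_mat m m" and NN: "N * N = 0\<^sub>m m m"
  shows "the (mat_inverse (1\<^sub>m m - N)) = 1\<^sub>m m + N"
proof (rule mat_inverse_eqI)
  have one: "1\<^sub>m m \<in> carrier_mat m m" by simp
  show "(1\<^sub>m m - N) * (1\<^sub>m m + N) = 1\<^sub>m m"
  proof -
    have "(1\<^sub>m m - N) * (1\<^sub>m m + N) = 1\<^sub>m m * (1\<^sub>m m + N) - N * (1\<^sub>m m + N)"
      by (rule minus_mult_distrib_mat) (use N in auto)
    also have "\<dots> = (1\<^sub>m m + N) - (N * 1\<^sub>m m + N * N)"
      using N by (simp add: mult_add_distrib_mat[OF N one N])
    also have "\<dots> = 1\<^sub>m m" using N NN by (intro eq_matI) auto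
    finally show ?thesis .
  qed
  show "(1\<^sub>m m + N) * (1\<^sub>m m - N) = 1\<^sub>m m"
  proof -
    have "(1\<^sub>m m + N) * (1\<^sub>m m - N) = 1\<^sub>m m * (1\<^sub>m m - N) + N * (1\<^sub>m m - N)"
      by (rule add_mult_distrib_mat) (use N in auto)
    also have "\<dots> = (1\<^sub>m m - N) + (N * 1\<^sub>m m - N * N)"
      using N by (simp add: mult_minus_distrib_mat[OF N one N])
    also have "\<dots> = 1\<^sub>m m" using N NN by (intro eq_matI) auto
    finally show ?thesis .
  qed
qed (use N in auto)

lemma conjugate_expand:
  fixes A N :: "'a::field mat"
  assumes A: "A \<in> carrier_mat m m" and N: "N \<in> carrier_mat m m"
  shows "(1\<^sub>m m + N) * A * (1\<^sub>m m - N) = A + N * A - (A * N + N * A * N)"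
proof -
  have one: "1\<^sub>m m \<in> carrier_mat m m" by simp
  have NA: "N * A \<in> carrier_mat m m" and ANA: "A + N * A \<in> carrier_mat m m"
    using A N by auto
  have "(1\<^sub>m m + N) * A = A + N * A"
    using add_mult_distrib_mat[OF one N A] A by simp
  moreover have "(A + N * A) * (1\<^sub>m m - N) = (A + N * A) - (A * N + N * A * N)"
    using mult_minus_distrib_mat[OF ANA one N] add_mult_distrib_mat[OF A NA N]
      right_mult_one_mat[OF ANA] by simp
  ultimately show ?thesis by simp
qed

text \<open>Right multiplication by it adds multiples of
 column \<sigma> b to column b; left multiplication adds multiples of row b to row \<sigma> b.\<close>
definition column_op_mat :: "nat \<Rightarrow> nat set \<Rightarrow> (nat \<Rightarrow> nat) \<Rightarrow> (nat \<Rightarrow> 'a::field) \<Rightarrow> 'a mat" where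
  "column_op_mat m B \<sigma> c = mat m m (\<lambda>(a, b). if b \<in> B \<and> a = \<sigma> b then c b else 0)"

lemma column_op_mat_carrier [simp]: "column_op_mat m B \<sigma> c \<in> carrier_mat m m"
  by (simp add: column_op_mat_def)

lemma column_op_mat_entry:
  "a < m \<Longrightarrow> b < m \<Longrightarrow> column_op_mat m B \<sigma> c $$ (a, b) = (if b \<in> B \<and> a = \<sigma> b then c b else 0)"
  by (simp add: column_op_mat_def)

lemma square_mult_entry:
  assumes "A \<in> carrier_mat m m" "B \<in> carrier_mat m m" "i < m" "j < m"
  shows "(A * B) $$ (i, j) = (\<Sum>t<m. A $$ (i, t) * B $$ (t, j))"
  using assms by (simp add: scalar_prod_def lessThan_atLeast0)

lemma mult_column_op_mat:
  assumes M: "M \<in> carrier_mat m m" and ab: "a < m" "b < m"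
    and range: "b \<in> B \<Longrightarrow> \<sigma> b < m"
  shows "(M * column_op_mat m B \<sigma> c) $$ (a, b) = (if b \<in> B then c b * M $$ (a, \<sigma> b) else 0)"
proof -
  have "(M * column_op_mat m B \<sigma> c) $$ (a, b) = (\<Sum>t<m. M $$ (a, t) * column_op_mat m B \<sigma> c $$ (t, b))"
    using square_mult_entry[OF M column_op_mat_carrier ab] .
  also have "\<dots> = (\<Sum>t<m. if t = \<sigma> b then (if b \<in> B then c b * M $$ (a, \<sigma> b) else 0) else 0)"
    by (rule sum.cong) (auto simp: column_op_mat_entry ab)
  also have "\<dots> = (if b \<in> B then c b * M $$ (a, \<sigma> b) else 0)"
    using range by (simp add: sum.delta)
  finally show ?thesis .
qed

lemma column_op_mat_mult_nonzero:
  assumes M: "M \<in> carrier_mat m m" and ab: "a < m" "b < m"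
    and nz: "(column_op_mat m B \<sigma> c * M) $$ (a, b) \<noteq> 0"
  obtains x where "x \<in> B" "x < m" "\<sigma> x = a" "M $$ (x, b) \<noteq> 0"
proof -
  have "(\<Sum>t<m. column_op_mat m B \<sigma> c $$ (a, t) * M $$ (t, b)) \<noteq> 0"
    using square_mult_entry[OF column_op_mat_carrier M ab] nz by simp
  then obtain t where "t < m" "column_op_mat m B \<sigma> c $$ (a, t) * M $$ (t, b) \<noteq> 0"
    using sum.not_neutral_contains_not_neutral by blast
  with ab that show ?thesis by (auto simp: column_op_mat_entry split: if_splits)
qed

lemma column_op_mat_square_zero:
  assumes "\<And>b. b \<in> B \<Longrightarrow> \<sigma> b \<notin> B"
  shows "column_op_mat m B \<sigma> c * column_op_mat m B \<sigma> c = 0\<^sub>m m m"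
proof (rule eq_matI)
  fix a b assume "a < dim_row (0\<^sub>m m m :: 'a mat)" "b < dim_col (0\<^sub>m m m :: 'a mat)"
  hence ab: "a < m" "b < m" by auto
  show "(column_op_mat m B \<sigma> c * column_op_mat m B \<sigma> c) $$ (a, b) = (0\<^sub>m m m :: 'a mat) $$ (a, b)"
  proof (rule ccontr)
    assume "(column_op_mat m B \<sigma> c * column_op_mat m B \<sigma> c) $$ (a, b) \<noteq> (0\<^sub>m m m :: 'a mat) $$ (a, b)"
    hence "(column_op_mat m B \<sigma> c * column_op_mat m B \<sigma> c) $$ (a, b) \<noteq> 0" using ab by simp
    then obtain x where "x \<in> B" "x < m" "\<sigma> x = a" "column_op_mat m B \<sigma> c $$ (x, b) \<noteq> 0"
      by (rule column_op_mat_mult_nonzero[OF column_op_mat_carrier ab])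
    with ab assms show False by (auto simp: column_op_mat_entry split: if_splits)
  qed
qed (simp_all add: column_op_mat_def)

locale isa_invariant =
  fixes m r :: nat and A :: "'a::field mat" and P :: "(nat \<times> nat) set"
  assumes carrier: "A \<in> carrier_mat m m"
    and strictly_upper: "\<And>i j. i < m \<Longrightarrow> j < m \<Longrightarrow> A $$ (i, j) \<noteq> 0 \<Longrightarrow> i < j"
    and pivot_position: "\<And>i j. (i, j) \<in> P \<Longrightarrow> i < j \<and> j < m \<and> j - i < r"
    and pivot_nonzero: "\<And>i j. (i, j) \<in> P \<Longrightarrow> A $$ (i, j) \<noteq> 0"
    and pivot_row_unique: "\<And>i j j'. (i, j) \<in> P \<Longrightarrow> (i, j') \<in> P \<Longrightarrow> j = j'"
    and pivot_col_unique: "\<And>i i' j. (i, j) \<in> P \<Longrightarrow> (i', j) \<in> P \<Longrightarrow> i = i'"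
    and swept: "\<And>i j. i < m \<Longrightarrow> j < m \<Longrightarrow> A $$ (i, j) \<noteq> 0 \<Longrightarrow> j - i < r \<Longrightarrow>
                  (i, j) \<in> P \<or> (\<exists>k. (k, j) \<in> P \<and> i < k)"
begin

lemma below_pivot_zero:
  assumes "(q, j) \<in> P" "q < a" "a < m"
  shows "A $$ (a, j) = 0"
proof (rule ccontr)
  assume nz: "A $$ (a, j) \<noteq> 0"
  from pivot_position[OF assms(1)] assms(2) have "j < m" "j - a < r" by auto
  from swept[OF assms(3) this(1) nz this(2)] obtain k where "(k, j) \<in> P" "a \<le> k"
    by auto
  with pivot_col_unique[OF assms(1)] assms(2) show False by auto
qed

lemma free_column_zero:
  assumes "\<not> has_prim_col P j" "a < m" "j < m" "j - a < r"
  shows "A $$ (a, j) = 0"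
  using swept[OF assms(2,3) _ assms(4)] assms(1) unfolding has_prim_col_def by blast

lemma fully_swept:
  assumes "m \<le> r" "i < m" "j < m" "A $$ (i, j) \<noteq> 0"
  shows "(i, j) \<in> P \<or> (\<exists>k. (k, j) \<in> P \<and> i < k \<and> (\<forall>k'. (k', j) \<in> P \<longrightarrow> k' = k))"
proof -
  have "j - i < r" using assms(1,3) by linarith
  with swept[OF assms(2-4)] pivot_col_unique show ?thesis by blast
qed

lemma prim_col_of_row_eq: "(i, p) \<in> P \<Longrightarrow> prim_col_of_row P i = p"
  unfolding prim_col_of_row_def using pivot_row_unique by blast

end

locale isa_iteration = isa_invariant +
  assumes r_pos: "1 \<le> r"
begin

abbreviation cob :: "nat set" where "cob \<equiv> isa_cob r A P"

abbreviation sweep_source :: "nat \<Rightarrow> nat" where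
  "sweep_source b \<equiv> prim_col_of_row P (b - r)"

definition sweep_coeff :: "nat \<Rightarrow> 'a" where
  "sweep_coeff b = A $$ (b - r, b) / A $$ (b - r, sweep_source b)"

definition N :: "'a mat" where
  "N = column_op_mat m cob sweep_source sweep_coeff"

lemma N_carrier [simp]: "N \<in> carrier_mat m m"
  and N_dims [simp]: "dim_row N = m" "dim_col N = m"
  by (simp_all add: N_def column_op_mat_def)

lemma cob_iff:
  "j \<in> cob \<longleftrightarrow> r \<le> j \<and> j < m \<and> A $$ (j - r, j) \<noteq> 0 \<and> \<not> has_prim_col P j \<and> has_prim_row P (j - r)"
  using carrier unfolding isa_cob_def isa_cand_def by auto

lemma newprim_iff:
  "(i, j) \<in> isa_newprim r A P \<longleftrightarrow>
     r \<le> j \<and> j < m \<and> i = j - r \<and> A $$ (i, j) \<noteq> 0 \<and> \<not> has_prim_col P j \<and> \<not> has_prim_row P i"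
  using carrier unfolding isa_newprim_def isa_cand_def by auto

lemma cob_source_pivot:
  assumes "j \<in> cob"
  shows "(j - r, sweep_source j) \<in> P" "j - r < sweep_source j" "sweep_source j < j"
proof -
  from assms obtain p where p: "(j - r, p) \<in> P" and "r \<le> j"
    unfolding cob_iff has_prim_row_def by auto
  with prim_col_of_row_eq[OF p] pivot_position[OF p]
  show "(j - r, sweep_source j) \<in> P" "j - r < sweep_source j" "sweep_source j < j"
    by auto
qed

lemma cob_less: "j \<in> cob \<Longrightarrow> j < m"
  by (simp add: cob_iff)

lemma isa_T_eq: "isa_T r A P = 1\<^sub>m m - N"
proof (rule eq_matI)
  fix a b assume "a < dim_row (1\<^sub>m m - N)" "b < dim_col (1\<^sub>m m - N)"
  hence ab: "a < m" "b < m" by auto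
  have fin: "finite cob" using cob_less by (meson finite_lessThan finite_subset lessThan_iff subsetI)
  have "isa_T r A P $$ (a, b) = (if a = b then 1 else 0) -
     (\<Sum>j\<in>cob. A $$ (j - r, j) / A $$ (j - r, sweep_source j) *
            (if a = sweep_source j \<and> b = j then 1 else 0))"
    using ab carrier by (simp add: isa_T_def)
  also have "(\<Sum>j\<in>cob. A $$ (j - r, j) / A $$ (j - r, sweep_source j) *
            (if a = sweep_source j \<and> b = j then 1 else 0)) =
        (\<Sum>j\<in>cob. if b = j then (if a = sweep_source b then sweep_coeff b else 0) else 0)"
    by (rule sum.cong) (auto simp: sweep_coeff_def)
  also have "\<dots> = N $$ (a, b)"
    using fin ab by (simp add: sum.delta N_def column_op_mat_entry)
  finally show "isa_T r A P $$ (a, b) = (1\<^sub>m m - N) $$ (a, b)"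
    using ab by simp
qed (use carrier in \<open>auto simp: isa_T_def\<close>)

text \<open>Source columns carry primary pivots, hence are never change-of-basis columns.\<close>
lemma N_square_zero: "N * N = 0\<^sub>m m m"
  unfolding N_def
proof (rule column_op_mat_square_zero)
  fix b assume "b \<in> cob"
  hence "has_prim_col P (sweep_source b)"
    using cob_source_pivot(1) unfolding has_prim_col_def by blast
  thus "sweep_source b \<notin> cob" by (simp add: cob_iff)
qed

text \<open>One iteration conjugates by T = 1 - N, whose inverse is 1 + N.\<close>
lemma isa_step_eq:
  "isa_step r (A, P) = (A + N * A - (A * N + N * A * N), P \<union> isa_newprim r A P)"
  using square_zero_inverse[OF N_carrier N_square_zero] conjugate_expand[OF carrier N_carrier]
  by (simp add: isa_step_def Let_def isa_T_eq)

abbreviation A_next :: "'a mat" where "A_next \<equiv> fst (isa_step r (A, P))"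
abbreviation P_next :: "(nat \<times> nat) set" where "P_next \<equiv> snd (isa_step r (A, P))"

lemma swept_entry:
  "i < m \<Longrightarrow> j < m \<Longrightarrow> A_next $$ (i, j) =
     A $$ (i, j) + (N * A) $$ (i, j) - ((A * N) $$ (i, j) + (N * A * N) $$ (i, j))"
  using carrier by (simp add: isa_step_eq)

lemma mult_N_entry:
  assumes "M \<in> carrier_mat m m" "i < m" "j < m"
  shows "(M * N) $$ (i, j) = (if j \<in> cob then sweep_coeff j * M $$ (i, sweep_source j) else 0)"
  unfolding N_def
  by (rule mult_column_op_mat[OF assms]) (use cob_source_pivot cob_less in fastforce)

text \<open>Left multiplication by N adds multiples of rows x to rows sweep_source x < x,
 so it cannot change an entry whose column is already zero below it.\<close>
lemma N_mult_zero:
  assumes "i < m" "j < m" and below: "\<And>x. i < x \<Longrightarrow> x < m \<Longrightarrow> A $$ (x, j) = 0"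
  shows "(N * A) $$ (i, j) = 0"
proof (rule ccontr)
  assume "(N * A) $$ (i, j) \<noteq> 0"
  then obtain x where "x \<in> cob" "x < m" "sweep_source x = i" "A $$ (x, j) \<noteq> 0"
    by (metis N_def column_op_mat_mult_nonzero[OF carrier assms(1,2)])
  with cob_source_pivot(3) below show False by blast
qed

text \<open>Column j \<in> cob of A N is a multiple of column sweep_source j of A, which
 vanishes below the primary pivot in row j - r; so A N vanishes where j < i + r.\<close>
lemma mult_N_zero:
  assumes "i < m" "j < m" "j < i + r"
  shows "(A * N) $$ (i, j) = 0"
proof (cases "j \<in> cob")
  case True
  have "j - r < i" using True assms(3) unfolding cob_iff by linarith
  with below_pivot_zero[OF cob_source_pivot(1)[OF True]] assms(1)
  show ?thesis by (simp add: mult_N_entry[OF carrier assms(1,2)])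
qed (simp add: mult_N_entry[OF carrier assms(1,2)])

text \<open>Likewise N A N vanishes on and below the r-th diagonal, since N A
 only adds rows lying below those pivots.\<close>
lemma N_mult_N_zero:
  assumes "i < m" "j < m" "j \<le> i + r"
  shows "(N * A * N) $$ (i, j) = 0"
proof (cases "j \<in> cob")
  case True
  note piv = cob_source_pivot[OF True]
  have "sweep_source j < m" using piv(3) assms(2) by simp
  moreover have "j - r \<le> i" using assms(3) by simp
  ultimately have "(N * A) $$ (i, sweep_source j) = 0"
    using below_pivot_zero[OF piv(1)] assms(1) by (intro N_mult_zero) auto
  thus ?thesis
    using mult_N_entry[of "N * A", OF _ assms(1,2)] carrier True by fastforce
qed (use mult_N_entry[of "N * A", OF _ assms(1,2)] carrier in fastforce)

lemma P_next_eq: "P_next = P \<union> isa_newprim r A P"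
  by (simp add: isa_step_eq)

lemma A_next_lower_zero:
  assumes "i < m" "j < m" "j \<le> i"
  shows "A_next $$ (i, j) = 0"
proof -
  have "A $$ (i, j) = 0" using strictly_upper[OF assms(1,2)] assms(3) by fastforce
  moreover have "(N * A) $$ (i, j) = 0"
    using strictly_upper assms by (intro N_mult_zero) fastforce+
  moreover have "(A * N) $$ (i, j) = 0" using assms r_pos by (intro mult_N_zero) auto
  moreover have "(N * A * N) $$ (i, j) = 0" using assms by (intro N_mult_N_zero) auto
  ultimately show ?thesis by (simp add: swept_entry[OF assms(1,2)])
qed

lemma A_next_pivot_column:
  assumes "(q, j) \<in> P" "q \<le> i" "i < m"
  shows "A_next $$ (i, j) = A $$ (i, j)"
proof -
  have j: "j < m" "j < i + r" using pivot_position[OF assms(1)] assms(2) by auto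
  have "(N * A) $$ (i, j) = 0"
    using below_pivot_zero[OF assms(1)] assms(2) by (intro N_mult_zero assms(3) j(1)) auto
  moreover have "(A * N) $$ (i, j) = 0" by (rule mult_N_zero[OF assms(3) j])
  moreover have "(N * A * N) $$ (i, j) = 0" using j by (intro N_mult_N_zero assms(3)) auto
  ultimately show ?thesis by (simp add: swept_entry[OF assms(3) j(1)])
qed

lemma A_next_free_column:
  assumes "\<not> has_prim_col P j" "i < m" "j < m" "j - i < r"
  shows "A_next $$ (i, j) = 0"
proof -
  have "A $$ (i, j) = 0" by (rule free_column_zero[OF assms])
  moreover have "(N * A) $$ (i, j) = 0"
    using free_column_zero[OF assms(1) _ assms(3)] assms(4) by (intro N_mult_zero assms(2,3)) auto
  moreover have "(A * N) $$ (i, j) = 0" using assms by (intro mult_N_zero) auto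
  moreover have "(N * A * N) $$ (i, j) = 0" using assms by (intro N_mult_N_zero) auto
  ultimately show ?thesis by (simp add: swept_entry[OF assms(2,3)])
qed

lemma A_next_diagonal:
  assumes "\<not> has_prim_col P j" "r \<le> j" "j < m"
  shows "A_next $$ (j - r, j) = (if j \<in> cob then 0 else A $$ (j - r, j))"
proof -
  have i: "j - r < m" using assms(3) by simp
  have "(N * A) $$ (j - r, j) = 0"
  proof (rule N_mult_zero[OF i assms(3)])
    fix x assume "j - r < x" "x < m"
    moreover from this have "j - x < r" using assms(2) r_pos by arith
    ultimately show "A $$ (x, j) = 0" using free_column_zero[OF assms(1) _ assms(3)] by blast
  qed
  moreover have "(N * A * N) $$ (j - r, j) = 0" by (rule N_mult_N_zero[OF i assms(3)]) simp
  moreover have "(A * N) $$ (j - r, j) = (if j \<in> cob then A $$ (j - r, j) else 0)"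
    using mult_N_entry[OF carrier i assms(3)] cob_source_pivot(1)[THEN pivot_nonzero]
    by (simp add: sweep_coeff_def)
  ultimately show ?thesis by (simp add: swept_entry[OF i assms(3)])
qed

lemma P_next_pivot:
  assumes "(i, j) \<in> P_next"
  shows "i < j \<and> j < m \<and> j - i < Suc r \<and> A_next $$ (i, j) \<noteq> 0"
  using assms unfolding P_next_eq
proof
  assume old: "(i, j) \<in> P"
  show ?thesis
    using pivot_position[OF old] pivot_nonzero[OF old] A_next_pivot_column[OF old] by auto
next
  assume "(i, j) \<in> isa_newprim r A P"
  hence j: "r \<le> j" "j < m" "i = j - r" "A $$ (i, j) \<noteq> 0" "\<not> has_prim_col P j"
    and "\<not> has_prim_row P i" by (auto simp: newprim_iff)
  hence "j \<notin> cob" by (simp add: cob_iff)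
  with A_next_diagonal[OF j(5,1,2)] j strictly_upper[of i j] show ?thesis by auto
qed

text \<open>The new primary pivots lie in pairwise distinct rows and columns,
 none shared with an earlier pivot.\<close>
lemma P_next_unique:
  "(i, j) \<in> P_next \<Longrightarrow> (i, j') \<in> P_next \<Longrightarrow> j = j'"
  "(i, j) \<in> P_next \<Longrightarrow> (i', j) \<in> P_next \<Longrightarrow> i = i'"
  using pivot_row_unique pivot_col_unique
  by (auto simp: P_next_eq newprim_iff has_prim_row_def has_prim_col_def)

lemma A_next_swept:
  assumes ij: "i < m" "j < m" and nz: "A_next $$ (i, j) \<noteq> 0" and d: "j - i < Suc r"
  shows "(i, j) \<in> P_next \<or> (\<exists>k. (k, j) \<in> P_next \<and> i < k)"
proof (cases "has_prim_col P j")
  case True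
  then obtain q where q: "(q, j) \<in> P" unfolding has_prim_col_def by auto
  have "i \<le> q"
  proof (rule ccontr)
    assume "\<not> i \<le> q"
    hence "A_next $$ (i, j) = 0"
      using A_next_pivot_column[OF q _ ij(1)] below_pivot_zero[OF q _ ij(1)] by simp
    with nz show False by contradiction
  qed
  with q show ?thesis unfolding P_next_eq by (cases "i = q") auto
next
  case False
  have "i < j" using A_next_lower_zero[OF ij] nz by (meson not_le)
  moreover have "\<not> j - i < r" using A_next_free_column[OF False ij] nz by blast
  ultimately have i: "i = j - r" "r \<le> j" using d by auto
  hence "j \<notin> cob" "A $$ (i, j) \<noteq> 0" using A_next_diagonal[OF False i(2) ij(2)] nz
    by (auto split: if_splits)
  hence "(i, j) \<in> isa_newprim r A P"
    using i ij False by (auto simp: cob_iff newprim_iff)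
  thus ?thesis unfolding P_next_eq by blast
qed

lemma invariant_next: "isa_invariant m (Suc r) A_next P_next"
proof
  show "A_next \<in> carrier_mat m m" using carrier N_carrier by (auto simp: isa_step_eq)
  show "\<And>i j. i < m \<Longrightarrow> j < m \<Longrightarrow> A_next $$ (i, j) \<noteq> 0 \<Longrightarrow> i < j"
    using A_next_lower_zero by (meson not_le)
qed (use P_next_pivot P_next_unique A_next_swept in auto)

end

lemma isa_state_invariant:
  fixes D :: "'a::field mat"
  assumes D: "D \<in> carrier_mat m m"
    and upper: "\<And>i j. i < m \<Longrightarrow> j < m \<Longrightarrow> D $$ (i, j) \<noteq> 0 \<Longrightarrow> i < j"
  shows "isa_invariant m (Suc r) (fst (isa_state D (Suc r))) (snd (isa_state D (Suc r)))"
proof (induction r)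
  case 0
  have "isa_invariant m (Suc 0) D {}"
  proof
    fix i j assume "i < m" "j < m" "D $$ (i, j) \<noteq> 0" "j - i < Suc 0"
    with upper[of i j] show "(i, j) \<in> {} \<or> (\<exists>k. (k, j) \<in> {} \<and> i < k)" by simp
  qed (use D upper in auto)
  thus ?case by simp
next
  case (Suc r)
  interpret isa_iteration m "Suc r" "fst (isa_state D (Suc r))" "snd (isa_state D (Suc r))"
    by (rule isa_iteration.intro[OF Suc.IH]) (simp add: isa_iteration_axioms_def)
  show ?case using invariant_next by simp
qed

theorem mainTheorem3:
  fixes D :: "'a::field mat" and m :: nat
  assumes "1 \<le> m" and "connection_matrix m D"
  shows "(\<forall>(i, j) \<in> snd (isa_state D m). fst (isa_state D m) $$ (i, j) \<noteq> 0)
       \<and> (\<forall>i<m. \<forall>j<m. fst (isa_state D m) $$ (i, j) \<noteq> 0 \<longrightarrow>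
            (i, j) \<in> snd (isa_state D m) \<or>
            (\<exists>k. (k, j) \<in> snd (isa_state D m) \<and> i < k \<and>
                 (\<forall>k'. (k', j) \<in> snd (isa_state D m) \<longrightarrow> k' = k)))
       \<and> (\<forall>j<m. \<not> (\<exists>k. (k, j) \<in> snd (isa_state D m)) \<longrightarrow>
            (\<forall>i<m. fst (isa_state D m) $$ (i, j) = 0))"
proof -
  obtain r where m: "m = Suc r" using assms(1) by (cases m) auto
  have "D \<in> carrier_mat m m" "\<And>i j. i < m \<Longrightarrow> j < m \<Longrightarrow> D $$ (i, j) \<noteq> 0 \<Longrightarrow> i < j"
    using assms(2) unfolding connection_matrix_def by blast+
  from isa_state_invariant[OF this, of r]
  interpret isa_invariant m m "fst (isa_state D m)" "snd (isa_state D m)"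
    by (simp add: m)
  have "\<forall>(i, j) \<in> snd (isa_state D m). fst (isa_state D m) $$ (i, j) \<noteq> 0"
    using pivot_nonzero by blast
  moreover have "\<forall>i<m. \<forall>j<m. fst (isa_state D m) $$ (i, j) \<noteq> 0 \<longrightarrow>
            (i, j) \<in> snd (isa_state D m) \<or>
            (\<exists>k. (k, j) \<in> snd (isa_state D m) \<and> i < k \<and>
                 (\<forall>k'. (k', j) \<in> snd (isa_state D m) \<longrightarrow> k' = k))"
    using fully_swept[OF order_refl] by blast
  moreover have "\<forall>j<m. \<not> (\<exists>k. (k, j) \<in> snd (isa_state D m)) \<longrightarrow>
            (\<forall>i<m. fst (isa_state D m) $$ (i, j) = 0)"
    using fully_swept[OF order_refl] by blast
  ultimately show ?thesis by (intro conjI)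
qed

end
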